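(* Let $\mathcal{T}=[0,T_{max}]$, $\mathcal{T}_d,\mathcal{T}_a\subseteq\mathcal{T}$ compact, $\mathcal{X}=[X_{min},X_{max}]$ with $0\le X_{min}<X_{max}$, $m$ a probability measure on $\mathcal{X}\times\mathcal{T}_a$, $G>0$, and $V:\mathbb{R}^+\to\mathbb{R}^+$ a strictly decreasing Lipschitz continuous speed function. Fix $F\in\mathcal{P}_{m,G}$ and define $\mathcal{U}(\cdot,F):\mathcal{C}(\mathcal{T})\to\mathcal{C}(\mathcal{T})$ by $\mathcal{U}(z,F)(t)=\int_0^t V\big(F(S_s(z))\big)\,ds$. Then for an arbitrary $z_0\in\mathcal{C}(\mathcal{T})$, the sequence $z_l:=\mathcal{U}(z_{l-1},F)$, $l\ge1$, converges uniformly on $\mathcal{T}$ to $z^*$, the unique function in $\mathcal{C}(\mathcal{T})$ satisfying $z^*(t)=\int_0^t V\big(F(S_s(z^* ))\big)\,ds$ for all $t\in\mathcal{T}$.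
   Context: $\mathcal{C}(\mathcal{T})$ denotes the space of real-valued continuous functions on $\mathcal{T}$ with the uniform norm. $\lambda_2$ denotes Lebesgue measure on $\mathbb{R}^2$. $\mathcal{P}_{m,G}$ is the set of all Borel probability measures $F$ on $\mathcal{T}_d\times\mathcal{X}$ such that (i) $F(B)\le G\,\lambda_2(B)$ for every Borel set $B\subseteq\mathcal{T}_d\times\mathcal{X}$, and (ii) $F(\mathcal{T}_d\times B)=m(B\times\mathcal{T}_a)$ for every Borel set $B\subseteq\mathcal{X}$. For $z\in\mathcal{C}(\mathcal{T})$ and $t\in\mathcal{T}$, $S_t(z):=\{(\tau,\xi)\,:\,\tau\in[0,t]\cap\mathcal{T}_d,\ \xi\in(z(t)-z(\tau),\infty)\cap\mathcal{X}\}$. *)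

theory Defs
  imports "HOL-Analysis.Analysis" "HOL-Probability.Probability"
begin

definition S_set :: "real set \<Rightarrow> real set \<Rightarrow> real \<Rightarrow> (real \<Rightarrow> real) \<Rightarrow> (real \<times> real) set" where
  "S_set Td X t z = {(\<tau>, \<xi>). \<tau> \<in> {0..t} \<inter> Td \<and> \<xi> \<in> {z t - z \<tau><..} \<inter> X}"

definition P_mG :: "real set \<Rightarrow> real set \<Rightarrow> real set \<Rightarrow> (real \<times> real) measure \<Rightarrow> real
    \<Rightarrow> (real \<times> real) measure set" where
  "P_mG Td Ta X m G = {F. prob_space F \<and> sets F = sets (restrict_space borel (Td \<times> X))
     \<and> (\<forall>B \<in> sets (borel :: (real \<times> real) measure). B \<subseteq> Td \<times> X \<longrightarrow>
          emeasure F B \<le> ennreal G * emeasure lborel B)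
     \<and> (\<forall>B \<in> sets (borel :: real measure). B \<subseteq> X \<longrightarrow>
          emeasure F (Td \<times> B) = emeasure m (B \<times> Ta))}"

definition U_op :: "real set \<Rightarrow> real set \<Rightarrow> (real \<Rightarrow> real) \<Rightarrow> (real \<times> real) measure
    \<Rightarrow> (real \<Rightarrow> real) \<Rightarrow> real \<Rightarrow> real" where
  "U_op Td X V F z t = integral {0..t} (\<lambda>s. V (measure F (S_set Td X s z)))"

end

theory Submission
  imports Defs
begin

(* Picard iteration converges because U is a contraction for the Bielecki norm
   sup_t |z t| exp (-beta t) with beta = 4 L G T + 1.  If |u - v| <= c exp (beta tau) on [0, s],
   then above every departure time tau <= s the sets S_s(u) and S_s(v) differ by an interval of
   length at most 2 c exp (beta s); integrating these slices and using the density bound G gives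
   |F(S_s u) - F(S_s v)| <= 2 G c s exp (beta s).  Through the L-Lipschitz speed V and the time
   integral this yields |U u t - U v t| <= (2 L G T / beta) c exp (beta t) <= c exp (beta t) / 2.
   The same slicing estimate shows that s \<mapsto> F(S_s(z)) is continuous, so U preserves continuity. *)

locale weighted_contraction =
  fixes S :: "'a::topological_space set" and w :: "'a \<Rightarrow> real" and q :: real
    and U :: "('a \<Rightarrow> real) \<Rightarrow> 'a \<Rightarrow> real"
  assumes compact_domain: "compact S"
    and continuous_weight: "continuous_on S w"
    and weight_ge_1: "\<And>t. t \<in> S \<Longrightarrow> 1 \<le> w t"
    and q_nonneg: "0 \<le> q" and q_less_1: "q < 1"
    and continuous_U: "\<And>f. continuous_on S f \<Longrightarrow> continuous_on S (U f)"
    and contraction_U: "\<And>u v c t. continuous_on S u \<Longrightarrow> continuous_on S v \<Longrightarrow> 0 \<le> c \<Longrightarrow>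
        (\<And>\<tau>. \<tau> \<in> S \<Longrightarrow> \<bar>u \<tau> - v \<tau>\<bar> \<le> c * w \<tau>) \<Longrightarrow> t \<in> S \<Longrightarrow>
        \<bar>U u t - U v t\<bar> \<le> q * c * w t"
begin

definition picard_sequence :: "(nat \<Rightarrow> 'a \<Rightarrow> real) \<Rightarrow> bool" where
  "picard_sequence z \<longleftrightarrow> continuous_on S (z 0) \<and> (\<forall>l. \<forall>t\<in>S. z (Suc l) t = U (z l) t)"

lemma bounded_on_compact_domain:
  fixes f :: "'a \<Rightarrow> real"
  assumes "continuous_on S f"
  obtains B where "0 \<le> B" "\<And>t. t \<in> S \<Longrightarrow> \<bar>f t\<bar> \<le> B"
proof -
  have "bounded (f ` S)"
    by (rule compact_imp_bounded[OF compact_continuous_image[OF assms compact_domain]])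
  then obtain B where "\<And>t. t \<in> S \<Longrightarrow> \<bar>f t\<bar> \<le> B"
    by (auto simp: bounded_iff)
  with that[of "max B 0"] show ?thesis by force
qed

lemma bounded_by_weight:
  assumes "continuous_on S f"
  obtains c where "0 \<le> c" "\<And>t. t \<in> S \<Longrightarrow> \<bar>f t\<bar> \<le> c * w t"
proof -
  obtain c where c: "0 \<le> c" "\<And>t. t \<in> S \<Longrightarrow> \<bar>f t\<bar> \<le> c"
    using bounded_on_compact_domain[OF assms] by blast
  have "c \<le> c * w t" if "t \<in> S" for t
    using mult_left_mono[OF weight_ge_1[OF that] c(1)] by simp
  with c that show ?thesis by force
qed

lemma picard_sequence_continuous:
  assumes "picard_sequence z"
  shows "continuous_on S (z n)"
proof (induction n)
  case 0
  then show ?case using assms by (simp add: picard_sequence_def)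
next
  case (Suc n)
  then show ?case
    using assms continuous_U continuous_on_eq by (fastforce simp: picard_sequence_def)
qed

lemma picard_sequence_Suc:
  "picard_sequence z \<Longrightarrow> picard_sequence (\<lambda>n. z (Suc n))"
  using picard_sequence_continuous[of z 1] by (simp add: picard_sequence_def)

lemma picard_sequence_fixed_point:
  "continuous_on S f \<Longrightarrow> \<forall>t\<in>S. f t = U f t \<Longrightarrow> picard_sequence (\<lambda>_. f)"
  by (simp add: picard_sequence_def)

lemma picard_sequences_distance:
  assumes y: "picard_sequence y" and z: "picard_sequence z" and c: "0 \<le> c"
    and start: "\<And>t. t \<in> S \<Longrightarrow> \<bar>y 0 t - z 0 t\<bar> \<le> c * w t"
  shows "t \<in> S \<Longrightarrow> \<bar>y n t - z n t\<bar> \<le> c * q ^ n * w t"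
proof (induction n arbitrary: t)
  case 0
  then show ?case using start by simp
next
  case (Suc n)
  have "\<bar>U (y n) t - U (z n) t\<bar> \<le> q * (c * q ^ n) * w t"
    using Suc c q_nonneg
    by (intro contraction_U picard_sequence_continuous[OF y] picard_sequence_continuous[OF z]) auto
  then show ?case
    using y z Suc.prems by (simp add: picard_sequence_def mult_ac)
qed

lemma picard_sequence_uniform_limit:
  assumes z: "picard_sequence z"
  obtains zs where "uniform_limit S z zs sequentially"
proof -
  obtain W where W: "\<And>t. t \<in> S \<Longrightarrow> \<bar>w t\<bar> \<le> W"
    using bounded_on_compact_domain[OF continuous_weight] by blast
  obtain c where c: "0 \<le> c" "\<And>t. t \<in> S \<Longrightarrow> \<bar>z 1 t - z 0 t\<bar> \<le> c * w t"
    using bounded_by_weight[of "\<lambda>t. z 1 t - z 0 t"] picard_sequence_continuous[OF z]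
    by (metis continuous_on_diff)
  define d where "d i t = z (Suc i) t - z i t" for i t
  have "norm (d i t) \<le> c * W * q ^ i" if "t \<in> S" for i t
  proof -
    have "\<bar>d i t\<bar> \<le> c * q ^ i * w t"
      unfolding d_def using picard_sequences_distance[OF picard_sequence_Suc[OF z] z c(1)] c(2) that
      by simp
    also have "\<dots> \<le> c * q ^ i * W"
      using W[OF that] c(1) q_nonneg by (intro mult_left_mono) auto
    finally show ?thesis by (simp add: mult_ac)
  qed
  moreover have "summable (\<lambda>i. c * W * q ^ i)"
    using q_nonneg q_less_1 by (intro summable_mult summable_geometric) simp
  ultimately have "uniform_limit S (\<lambda>n t. \<Sum>i<n. d i t) (\<lambda>t. \<Sum>i. d i t) sequentially"
    by (rule Weierstrass_m_test)
  then have "uniform_limit S (\<lambda>n t. z 0 t + (\<Sum>i<n. d i t)) (\<lambda>t. z 0 t + (\<Sum>i. d i t)) sequentially"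
    by (intro uniform_limit_intros) auto
  moreover have "(\<lambda>n t. z 0 t + (\<Sum>i<n. d i t)) = z"
    unfolding d_def by (intro ext) (simp add: sum_lessThan_telescope[of "\<lambda>i. z i _"])
  ultimately show ?thesis
    using that by simp
qed

lemma uniform_limit_continuous:
  "picard_sequence z \<Longrightarrow> uniform_limit S z zs sequentially \<Longrightarrow> continuous_on S zs"
  by (rule uniform_limit_theorem[OF always_eventually]) (auto intro: picard_sequence_continuous)

lemma uniform_limit_fixed_point:
  assumes z: "picard_sequence z" and lim: "uniform_limit S z zs sequentially" and t: "t \<in> S"
  shows "zs t = U zs t"
proof (rule LIMSEQ_unique)
  show "(\<lambda>n. z (Suc n) t) \<longlonglongrightarrow> zs t"
    using tendsto_uniform_limitI[OF lim t] by (rule LIMSEQ_Suc)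
  have "(\<lambda>n. U (z n) t) \<longlonglongrightarrow> U zs t"
  proof (rule tendstoI)
    fix r :: real
    assume "0 < r"
    moreover have w_pos: "0 < w t"
      using weight_ge_1[OF t] by simp
    ultimately have "\<forall>\<^sub>F n in sequentially. \<forall>x\<in>S. dist (z n x) (zs x) < r / w t"
      using lim by (intro uniform_limitD) auto
    then show "\<forall>\<^sub>F n in sequentially. dist (U (z n) t) (U zs t) < r"
    proof eventually_elim
      case (elim n)
      have "\<bar>z n x - zs x\<bar> \<le> r / w t * w x" if "x \<in> S" for x
        using elim[rule_format, OF that] mult_left_mono[OF weight_ge_1[OF that], of "r / w t"]
          \<open>0 < r\<close> w_pos
        by (simp add: dist_real_def)
      then have "\<bar>U (z n) t - U zs t\<bar> \<le> q * (r / w t) * w t"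
        using \<open>0 < r\<close> w_pos t
        by (intro contraction_U picard_sequence_continuous[OF z] uniform_limit_continuous[OF z lim])
          auto
      also have "\<dots> < r"
        using q_less_1 \<open>0 < r\<close> w_pos by simp
      finally show ?case
        by (simp add: dist_real_def)
    qed
  qed
  then show "(\<lambda>n. z (Suc n) t) \<longlonglongrightarrow> U zs t"
    using z t by (simp add: picard_sequence_def)
qed

lemma fixed_point_unique:
  assumes f: "continuous_on S f" "\<forall>t\<in>S. f t = U f t"
    and g: "continuous_on S g" "\<forall>t\<in>S. g t = U g t"
    and t: "t \<in> S"
  shows "f t = g t"
proof -
  obtain c where c: "0 \<le> c" "\<And>t. t \<in> S \<Longrightarrow> \<bar>f t - g t\<bar> \<le> c * w t"
    using bounded_by_weight[of "\<lambda>t. f t - g t"] f(1) g(1) by (metis continuous_on_diff)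
  have "\<bar>f t - g t\<bar> \<le> c * w t * q ^ n" for n
    using picard_sequences_distance[OF picard_sequence_fixed_point[OF f]
        picard_sequence_fixed_point[OF g] c t]
    by (simp add: mult_ac)
  moreover have "(\<lambda>n. c * w t * q ^ n) \<longlonglongrightarrow> 0"
    using q_nonneg q_less_1 by (intro tendsto_mult_right_zero LIMSEQ_realpow_zero)
  ultimately have "\<bar>f t - g t\<bar> \<le> 0"
    by (intro LIMSEQ_le_const) auto
  then show ?thesis
    by simp
qed

theorem picard_iteration:
  assumes "picard_sequence z"
  shows "\<exists>zs. continuous_on S zs \<and> (\<forall>t\<in>S. zs t = U zs t)
           \<and> (\<forall>f. continuous_on S f \<and> (\<forall>t\<in>S. f t = U f t) \<longrightarrow> (\<forall>t\<in>S. f t = zs t))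
           \<and> uniform_limit S z zs sequentially"
proof -
  obtain zs where lim: "uniform_limit S z zs sequentially"
    using picard_sequence_uniform_limit[OF assms] .
  have "continuous_on S zs" and "\<forall>t\<in>S. zs t = U zs t"
    using uniform_limit_continuous[OF assms lim] uniform_limit_fixed_point[OF assms lim] by auto
  with lim show ?thesis
    using fixed_point_unique by blast
qed

end

lemma emeasure_lborel_le_by_slices:
  fixes A :: "(real \<times> real) set"
  assumes A: "A \<in> sets borel" "A \<subseteq> {a..b} \<times> UNIV" and ab: "a \<le> b" and r: "0 \<le> r"
    and slices: "\<And>\<tau>. \<tau> \<in> {a..b} \<Longrightarrow> emeasure lborel (Pair \<tau> -` A) \<le> ennreal r"
  shows "emeasure lborel A \<le> ennreal (r * (b - a))"
proof -
  have A_prod: "A \<in> sets (lborel \<Otimes>\<^sub>M lborel)"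
    unfolding lborel_prod using A(1) by simp
  have outside: "Pair \<tau> -` A = {}" if "\<tau> \<notin> {a..b}" for \<tau>
    using A(2) that by auto
  have "emeasure lborel A = emeasure (lborel \<Otimes>\<^sub>M lborel) A"
    by (simp add: lborel_prod)
  also have "\<dots> = (\<integral>\<^sup>+\<tau>. emeasure lborel (Pair \<tau> -` A) \<partial>lborel)"
    by (rule lborel.emeasure_pair_measure_alt[OF A_prod])
  also have "\<dots> \<le> (\<integral>\<^sup>+\<tau>. ennreal r * indicator {a..b} \<tau> \<partial>lborel)"
    using slices outside by (intro nn_integral_mono) (auto simp: indicator_def)
  also have "\<dots> = ennreal (r * (b - a))"
    using ab r by (simp add: nn_integral_cmult_indicator ennreal_mult)
  finally show ?thesis .
qed

lemma continuous_on_if_controlled: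
  fixes f g :: "real \<Rightarrow> real"
  assumes g: "continuous_on S g"
    and bound: "\<And>x y. x \<in> S \<Longrightarrow> y \<in> S \<Longrightarrow> \<bar>f y - f x\<bar> \<le> K * \<bar>g y - g x\<bar> + K' * \<bar>y - x\<bar>"
  shows "continuous_on S f"
  unfolding continuous_on_def
proof
  fix x
  assume x: "x \<in> S"
  let ?M = "\<lambda>y. K * \<bar>g y - g x\<bar> + K' * \<bar>y - x\<bar>"
  have "(g \<longlongrightarrow> g x) (at x within S)"
    using g x by (simp add: continuous_on_def)
  then have "(?M \<longlongrightarrow> K * \<bar>g x - g x\<bar> + K' * \<bar>x - x\<bar>) (at x within S)"
    by (intro tendsto_intros)
  then have "(?M \<longlongrightarrow> 0) (at x within S)"
    by simp
  moreover have "\<forall>\<^sub>F y in at x within S. norm (f y - f x) \<le> ?M y"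
    using bound x by (auto simp: eventually_at_filter)
  ultimately have "((\<lambda>y. f y - f x) \<longlongrightarrow> 0) (at x within S)"
    by (rule Lim_null_comparison[rotated])
  then show "(f \<longlongrightarrow> f x) (at x within S)"
    by (simp add: LIM_zero_iff)
qed

lemma integral_exp_le:
  fixes \<beta> t :: real
  assumes "0 < \<beta>" "0 \<le> t"
  shows "integral {0..t} (\<lambda>s. exp (\<beta> * s)) \<le> exp (\<beta> * t) / \<beta>"
proof -
  have "((\<lambda>s. exp (\<beta> * s)) has_integral exp (\<beta> * t) / \<beta> - exp (\<beta> * 0) / \<beta>) {0..t}"
    using assms
    by (intro fundamental_theorem_of_calculus)
      (auto intro!: derivative_eq_intros simp: has_real_derivative_iff_has_vector_derivative[symmetric])
  then show ?thesis
    using assms by (simp add: integral_unique)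
qed

locale bathtub =
  fixes Td :: "real set" and Xmin Xmax G L :: real
    and F :: "(real \<times> real) measure" and V :: "real \<Rightarrow> real"
  assumes closed_Td: "closed Td"
    and Xmin_le_Xmax: "Xmin \<le> Xmax"
    and G_nonneg: "0 \<le> G"
    and finite_F: "finite_measure F"
    and sets_F: "sets F = sets (restrict_space borel (Td \<times> {Xmin..Xmax}))"
    and density_F: "\<And>B. B \<in> sets borel \<Longrightarrow> B \<subseteq> Td \<times> {Xmin..Xmax} \<Longrightarrow>
        emeasure F B \<le> ennreal G * emeasure lborel B"
    and lipschitz_V: "L-lipschitz_on {0..} V"
begin

definition region_above :: "real \<Rightarrow> (real \<Rightarrow> real) \<Rightarrow> (real \<times> real) set" where
  "region_above a h = {(\<tau>, \<xi>). \<tau> \<in> {0..a} \<inter> Td \<and> \<xi> \<in> {h \<tau><..} \<inter> {Xmin..Xmax}}"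

(* The accumulation of the bathtub model: the mass of trips that departed at some tau <= s and
   whose length exceeds the distance z s - z tau covered since then. *)
definition accumulation :: "(real \<Rightarrow> real) \<Rightarrow> real \<Rightarrow> real" where
  "accumulation z s = measure F (S_set Td {Xmin..Xmax} s z)"

abbreviation U :: "(real \<Rightarrow> real) \<Rightarrow> real \<Rightarrow> real" where
  "U \<equiv> U_op Td {Xmin..Xmax} V F"

lemma S_set_eq_region_above: "S_set Td {Xmin..Xmax} s z = region_above s (\<lambda>\<tau>. z s - z \<tau>)"
  by (simp add: S_set_def region_above_def)

lemma U_eq_integral_accumulation: "U z t = integral {0..t} (\<lambda>s. V (accumulation z s))"
  by (simp add: U_op_def accumulation_def)

lemma accumulation_nonneg: "0 \<le> accumulation z s"
  by (simp add: accumulation_def)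

lemma region_above_borel:
  assumes "continuous_on {0..a} h"
  shows "region_above a h \<in> sets borel"
proof -
  let ?K = "({0..a} \<inter> Td) \<times> {Xmin..Xmax}"
  have "continuous_on ?K (\<lambda>p. snd p - h (fst p))"
    by (intro continuous_intros continuous_on_compose2[OF assms]) auto
  then have "openin (top_of_set ?K) (?K \<inter> (\<lambda>p. snd p - h (fst p)) -` {0<..})"
    by (rule continuous_openin_preimage_gen) simp
  then obtain W where "open W" "?K \<inter> (\<lambda>p. snd p - h (fst p)) -` {0<..} = ?K \<inter> W"
    by (auto simp: openin_open)
  moreover have "region_above a h = ?K \<inter> (\<lambda>p. snd p - h (fst p)) -` {0<..}"
    by (auto simp: region_above_def)
  moreover have "closed ?K"
    using closed_Td by (intro closed_Times closed_Int) auto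
  ultimately show ?thesis
    by (metis borel_closed borel_open sets.Int)
qed

lemma borel_in_sets_F:
  assumes "A \<in> sets borel" "A \<subseteq> Td \<times> {Xmin..Xmax}"
  shows "A \<in> sets F"
proof -
  have "closed (Td \<times> {Xmin..Xmax})"
    using closed_Td by (intro closed_Times) auto
  then show ?thesis
    unfolding sets_F using assms by (subst sets_restrict_space_iff) auto
qed

lemma measure_F_diff_le:
  assumes "A \<in> sets borel" "B \<in> sets borel" "A \<subseteq> Td \<times> {Xmin..Xmax}" "B \<subseteq> Td \<times> {Xmin..Xmax}"
    and "emeasure lborel (A - B) \<le> ennreal c" "0 \<le> c"
  shows "measure F A - measure F B \<le> G * c"
proof -
  interpret finite_measure F
    by (rule finite_F)
  have sets: "A \<in> sets F" "B \<in> sets F" "A - B \<in> sets F"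
    using assms borel_in_sets_F by auto
  have "ennreal (measure F (A - B)) = emeasure F (A - B)"
    using sets by (simp add: emeasure_eq_measure)
  also have "\<dots> \<le> ennreal G * emeasure lborel (A - B)"
    using assms by (intro density_F) auto
  also have "\<dots> \<le> ennreal (G * c)"
    using assms G_nonneg by (simp add: ennreal_mult mult_left_mono)
  finally have "measure F (A - B) \<le> G * c"
    using G_nonneg assms by (subst (asm) ennreal_le_iff) auto
  moreover have "measure F A - measure F B \<le> measure F (A - B)"
    using sets by (intro measure_diff_le_measure_setdiff) (auto simp: fmeasurable_eq_sets)
  ultimately show ?thesis
    by linarith
qed

lemma measure_region_above_diff_le:
  assumes h: "continuous_on {0..a} h1" "continuous_on {0..a} h2" and a: "0 \<le> a"
    and close: "\<And>\<tau>. \<tau> \<in> {0..a} \<Longrightarrow> \<bar>h1 \<tau> - h2 \<tau>\<bar> \<le> r"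
  shows "\<bar>measure F (region_above a h1) - measure F (region_above a h2)\<bar> \<le> G * r * a"
proof -
  have r: "0 \<le> r"
    using close[of 0] a by force
  have one_sided: "measure F (region_above a g2) - measure F (region_above a g1) \<le> G * (r * a)"
    if g: "continuous_on {0..a} g1" "continuous_on {0..a} g2"
      and close_g: "\<And>\<tau>. \<tau> \<in> {0..a} \<Longrightarrow> g2 \<tau> - g1 \<tau> \<ge> -r" for g1 g2
  proof (rule measure_F_diff_le)
    let ?E = "region_above a g2 - region_above a g1"
    show borel: "region_above a g1 \<in> sets borel" "region_above a g2 \<in> sets borel"
      using g by (auto intro: region_above_borel)
    have "emeasure lborel (Pair \<tau> -` ?E) \<le> ennreal r" if "\<tau> \<in> {0..a}" for \<tau>
    proof -
      have "Pair \<tau> -` ?E \<subseteq> {g2 \<tau>..g2 \<tau> + r}"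
        using close_g[OF that] by (auto simp: region_above_def)
      then have "emeasure lborel (Pair \<tau> -` ?E) \<le> emeasure lborel {g2 \<tau>..g2 \<tau> + r}"
        by (intro emeasure_mono) auto
      then show ?thesis
        using r by simp
    qed
    moreover have "?E \<subseteq> {0..a} \<times> UNIV"
      by (auto simp: region_above_def)
    ultimately show "emeasure lborel ?E \<le> ennreal (r * a)"
      using emeasure_lborel_le_by_slices[of ?E 0 a r] borel a r by auto
  qed (use r a in \<open>auto simp: region_above_def\<close>)
  show ?thesis
    using one_sided[OF h] one_sided[OF h(2,1)] close by (force simp: abs_le_iff)
qed

lemma measure_region_above_horizon_le:
  assumes h: "continuous_on {0..b} h" and ab: "0 \<le> a" "a \<le> b"
  shows "\<bar>measure F (region_above b h) - measure F (region_above a h)\<bar> \<le> G * (Xmax - Xmin) * (b - a)"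
proof -
  interpret finite_measure F
    by (rule finite_F)
  have borel: "region_above a h \<in> sets borel" "region_above b h \<in> sets borel"
    using ab by (auto intro!: region_above_borel continuous_on_subset[OF h])
  have "measure F (region_above a h) \<le> measure F (region_above b h)"
    using borel ab by (intro finite_measure_mono borel_in_sets_F) (auto simp: region_above_def)
  moreover have "measure F (region_above b h) - measure F (region_above a h) \<le> G * ((Xmax - Xmin) * (b - a))"
  proof (rule measure_F_diff_le)
    let ?E = "region_above b h - region_above a h"
    have "emeasure lborel (Pair \<tau> -` ?E) \<le> ennreal (Xmax - Xmin)" for \<tau>
    proof -
      have "emeasure lborel (Pair \<tau> -` ?E) \<le> emeasure lborel {Xmin..Xmax}"
        by (intro emeasure_mono) (auto simp: region_above_def)
      then show ?thesis
        using Xmin_le_Xmax by simp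
    qed
    moreover have "?E \<subseteq> {a..b} \<times> UNIV"
      by (auto simp: region_above_def)
    ultimately show "emeasure lborel ?E \<le> ennreal ((Xmax - Xmin) * (b - a))"
      using emeasure_lborel_le_by_slices[of ?E a b "Xmax - Xmin"] borel ab Xmin_le_Xmax by auto
  qed (use borel Xmin_le_Xmax ab in \<open>auto simp: region_above_def\<close>)
  ultimately show ?thesis
    by (simp add: mult_ac)
qed

lemma accumulation_diff_le:
  assumes "continuous_on {0..s} z" "continuous_on {0..s} y" "0 \<le> s"
    and "\<And>\<tau>. \<tau> \<in> {0..s} \<Longrightarrow> \<bar>(z s - z \<tau>) - (y s - y \<tau>)\<bar> \<le> r"
  shows "\<bar>accumulation z s - accumulation y s\<bar> \<le> G * r * s"
  unfolding accumulation_def S_set_eq_region_above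
  using assms by (intro measure_region_above_diff_le continuous_intros) auto

lemma accumulation_time_diff_le:
  assumes z: "continuous_on {0..s'} z" and s: "0 \<le> s" "s \<le> s'"
  shows "\<bar>accumulation z s' - accumulation z s\<bar> \<le> G * (s * \<bar>z s' - z s\<bar> + (Xmax - Xmin) * (s' - s))"
proof -
  let ?h = "\<lambda>\<tau>. z s - z \<tau>" and ?h' = "\<lambda>\<tau>. z s' - z \<tau>"
  have h': "continuous_on {0..s'} ?h'"
    using z by (intro continuous_intros)
  have h: "continuous_on {0..s} ?h" "continuous_on {0..s} ?h'"
    using s by (intro continuous_intros continuous_on_subset[OF z]; auto)+
  have horizon: "\<bar>measure F (region_above s' ?h') - measure F (region_above s ?h')\<bar>
      \<le> G * (Xmax - Xmin) * (s' - s)"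
    by (rule measure_region_above_horizon_le[OF h' s])
  have shift: "\<bar>measure F (region_above s ?h') - measure F (region_above s ?h)\<bar>
      \<le> G * \<bar>z s' - z s\<bar> * s"
    by (rule measure_region_above_diff_le[OF h(2,1) s(1)]) simp
  have "G * (s * \<bar>z s' - z s\<bar> + (Xmax - Xmin) * (s' - s))
      = G * (Xmax - Xmin) * (s' - s) + G * \<bar>z s' - z s\<bar> * s"
    by (simp add: algebra_simps)
  with horizon shift show ?thesis
    unfolding accumulation_def S_set_eq_region_above by linarith
qed

lemma continuous_on_accumulation:
  assumes z: "continuous_on {0..T} z"
  shows "continuous_on {0..T} (accumulation z)"
proof (rule continuous_on_if_controlled[OF z])
  have bound: "\<bar>accumulation z y - accumulation z x\<bar>
      \<le> G * T * \<bar>z y - z x\<bar> + G * (Xmax - Xmin) * \<bar>y - x\<bar>"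
    if "x \<in> {0..T}" "y \<in> {0..T}" "x \<le> y" for x y
  proof -
    have "\<bar>accumulation z y - accumulation z x\<bar> \<le> G * (x * \<bar>z y - z x\<bar> + (Xmax - Xmin) * (y - x))"
      using that by (intro accumulation_time_diff_le continuous_on_subset[OF z]) auto
    also have "\<dots> \<le> G * (T * \<bar>z y - z x\<bar> + (Xmax - Xmin) * \<bar>y - x\<bar>)"
      using that G_nonneg Xmin_le_Xmax by (intro mult_left_mono add_mono mult_right_mono) auto
    finally show ?thesis
      by (simp add: distrib_left mult.assoc)
  qed
  show "\<bar>accumulation z y - accumulation z x\<bar> \<le> G * T * \<bar>z y - z x\<bar> + G * (Xmax - Xmin) * \<bar>y - x\<bar>"
    if "x \<in> {0..T}" "y \<in> {0..T}" for x y
  proof (cases "x \<le> y")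
    case True
    then show ?thesis
      using bound that by blast
  next
    case False
    then show ?thesis
      using bound[of y x] that by (simp add: abs_minus_commute)
  qed
qed

lemma continuous_on_V_accumulation:
  "continuous_on {0..T} z \<Longrightarrow> continuous_on {0..T} (\<lambda>s. V (accumulation z s))"
  by (rule continuous_on_compose2[OF lipschitz_on_continuous_on[OF lipschitz_V]
        continuous_on_accumulation]) (auto simp: accumulation_nonneg)

lemma continuous_on_U:
  assumes "continuous_on {0..T} z"
  shows "continuous_on {0..T} (U z)"
  unfolding U_eq_integral_accumulation
  by (intro indefinite_integral_continuous_1 integrable_continuous_interval
      continuous_on_V_accumulation assms)

lemma V_accumulation_diff_le:
  assumes u: "continuous_on {0..s} u" and v: "continuous_on {0..s} v"
    and s: "0 \<le> s" and \<beta>: "0 \<le> \<beta>" and c: "0 \<le> c"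
    and close: "\<And>\<tau>. \<tau> \<in> {0..s} \<Longrightarrow> \<bar>u \<tau> - v \<tau>\<bar> \<le> c * exp (\<beta> * \<tau>)"
  shows "\<bar>V (accumulation u s) - V (accumulation v s)\<bar> \<le> 2 * L * G * s * c * exp (\<beta> * s)"
proof -
  have "\<bar>(u s - u \<tau>) - (v s - v \<tau>)\<bar> \<le> 2 * c * exp (\<beta> * s)" if \<tau>: "\<tau> \<in> {0..s}" for \<tau>
  proof -
    have "exp (\<beta> * \<tau>) \<le> exp (\<beta> * s)"
      using \<tau> \<beta> by (simp add: mult_left_mono)
    then have "\<bar>u \<tau> - v \<tau>\<bar> \<le> c * exp (\<beta> * s)"
      using close[OF \<tau>] mult_left_mono[OF _ c] by (meson order_trans)
    moreover have "\<bar>u s - v s\<bar> \<le> c * exp (\<beta> * s)"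
      using close s by simp
    ultimately show ?thesis
      by linarith
  qed
  then have accumulation_le: "\<bar>accumulation u s - accumulation v s\<bar> \<le> G * (2 * c * exp (\<beta> * s)) * s"
    by (rule accumulation_diff_le[OF u v s])
  have "\<bar>V (accumulation u s) - V (accumulation v s)\<bar> \<le> L * \<bar>accumulation u s - accumulation v s\<bar>"
    using lipschitz_onD[OF lipschitz_V] accumulation_nonneg by (auto simp: dist_real_def)
  also have "\<dots> \<le> L * (G * (2 * c * exp (\<beta> * s)) * s)"
    by (intro mult_left_mono accumulation_le lipschitz_on_nonneg[OF lipschitz_V])
  finally show ?thesis
    by (simp add: mult_ac)
qed

definition bielecki_rate :: "real \<Rightarrow> real" where
  "bielecki_rate T = 4 * L * G * T + 1"

lemma U_contraction:
  fixes T :: real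
  defines "\<beta> \<equiv> bielecki_rate T"
  assumes u: "continuous_on {0..T} u" and v: "continuous_on {0..T} v" and c: "0 \<le> c"
    and close: "\<And>\<tau>. \<tau> \<in> {0..T} \<Longrightarrow> \<bar>u \<tau> - v \<tau>\<bar> \<le> c * exp (\<beta> * \<tau>)"
    and t: "t \<in> {0..T}"
  shows "\<bar>U u t - U v t\<bar> \<le> 1 / 2 * c * exp (\<beta> * t)"
proof -
  let ?K = "2 * L * G * T * c"
  have LG: "0 \<le> L * G"
    using G_nonneg lipschitz_on_nonneg[OF lipschitz_V] by simp
  moreover have "0 \<le> T"
    using t by simp
  ultimately have LGT: "0 \<le> L * G * T"
    by simp
  then have \<beta>: "0 < \<beta>" and K_le: "2 * L * G * T \<le> \<beta> / 2"
    by (auto simp: \<beta>_def bielecki_rate_def)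
  have K: "0 \<le> ?K"
    using mult_nonneg_nonneg[OF LGT c] by (simp add: mult_ac)
  have integrable: "(\<lambda>s. V (accumulation f s)) integrable_on {0..t}" if "continuous_on {0..T} f" for f
    using t by (intro integrable_continuous_interval continuous_on_V_accumulation
        continuous_on_subset[OF that]) auto
  have pointwise: "norm (V (accumulation u s) - V (accumulation v s)) \<le> ?K * exp (\<beta> * s)"
    if s: "s \<in> {0..t}" for s
  proof -
    have "\<bar>V (accumulation u s) - V (accumulation v s)\<bar> \<le> 2 * L * G * s * c * exp (\<beta> * s)"
      using s t \<beta> c close
      by (intro V_accumulation_diff_le continuous_on_subset[OF u] continuous_on_subset[OF v]) auto
    also have "\<dots> \<le> ?K * exp (\<beta> * s)"
      using mult_left_mono[of s T "L * G"] s t LG c by (intro mult_right_mono) (auto simp: mult.assoc)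
    finally show ?thesis
      by simp
  qed
  have "\<bar>U u t - U v t\<bar> = norm (integral {0..t} (\<lambda>s. V (accumulation u s) - V (accumulation v s)))"
    by (simp add: U_eq_integral_accumulation integral_diff[OF integrable[OF u] integrable[OF v]])
  also have "\<dots> \<le> integral {0..t} (\<lambda>s. ?K * exp (\<beta> * s))"
    using pointwise
    by (intro integral_norm_bound_integral integrable_diff integrable[OF u] integrable[OF v]
        integrable_continuous_interval continuous_intros) auto
  also have "\<dots> = ?K * integral {0..t} (\<lambda>s. exp (\<beta> * s))"
    by simp
  also have "\<dots> \<le> ?K * (exp (\<beta> * t) / \<beta>)"
    using K integral_exp_le[OF \<beta>] t by (intro mult_left_mono) auto
  also have "\<dots> \<le> \<beta> / 2 * c * (exp (\<beta> * t) / \<beta>)"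
    using K_le c \<beta> by (intro mult_right_mono) auto
  also have "\<dots> = 1 / 2 * c * exp (\<beta> * t)"
    using \<beta> by simp
  finally show ?thesis .
qed

lemma weighted_contraction_U:
  assumes "0 \<le> T"
  shows "weighted_contraction {0..T} (\<lambda>t. exp (bielecki_rate T * t)) (1 / 2) U"
proof
  have "0 \<le> bielecki_rate T"
    using assms G_nonneg lipschitz_on_nonneg[OF lipschitz_V] by (simp add: bielecki_rate_def)
  then show "1 \<le> exp (bielecki_rate T * t)" if "t \<in> {0..T}" for t
    using that by simp
  show "continuous_on {0..T} (\<lambda>t. exp (bielecki_rate T * t))"
    by (intro continuous_intros)
  show "\<bar>U u t - U v t\<bar> \<le> 1 / 2 * c * exp (bielecki_rate T * t)"
    if "continuous_on {0..T} u" "continuous_on {0..T} v" "0 \<le> c"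
      "\<And>\<tau>. \<tau> \<in> {0..T} \<Longrightarrow> \<bar>u \<tau> - v \<tau>\<bar> \<le> c * exp (bielecki_rate T * \<tau>)" "t \<in> {0..T}"
    for u v c t
    using that by (rule U_contraction)
qed (simp_all add: continuous_on_U)

end

theorem corollary1:
  fixes Tmax Xmin Xmax G :: real
    and Td Ta :: "real set"
    and m F :: "(real \<times> real) measure"
    and V :: "real \<Rightarrow> real"
    and z0 :: "real \<Rightarrow> real"
    and z :: "nat \<Rightarrow> real \<Rightarrow> real"
  assumes Tmax: "0 < Tmax"
    and Td: "compact Td" "Td \<subseteq> {0..Tmax}"
    and Ta: "compact Ta" "Ta \<subseteq> {0..Tmax}"
    and X: "0 \<le> Xmin" "Xmin < Xmax"
    and m: "prob_space m" "sets m = sets (restrict_space borel ({Xmin..Xmax} \<times> Ta))"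
    and G: "G > 0"
    and V_nonneg: "\<forall>x \<ge> 0. V x \<ge> 0"
    and V_decr: "\<forall>x y. 0 \<le> x \<longrightarrow> x < y \<longrightarrow> V y < V x"
    and V_lip: "\<exists>L. L-lipschitz_on {0..} V"
    and F: "F \<in> P_mG Td Ta {Xmin..Xmax} m G"
    and z0: "continuous_on {0..Tmax} z0"
    and z_0: "\<forall>t \<in> {0..Tmax}. z 0 t = z0 t"
    and z_Suc: "\<forall>l. \<forall>t \<in> {0..Tmax}. z (Suc l) t = U_op Td {Xmin..Xmax} V F (z l) t"
  shows "\<exists>zs. continuous_on {0..Tmax} zs
           \<and> (\<forall>t \<in> {0..Tmax}. zs t = U_op Td {Xmin..Xmax} V F zs t)
           \<and> (\<forall>w. continuous_on {0..Tmax} w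
                  \<and> (\<forall>t \<in> {0..Tmax}. w t = U_op Td {Xmin..Xmax} V F w t)
                  \<longrightarrow> (\<forall>t \<in> {0..Tmax}. w t = zs t))
           \<and> uniform_limit {0..Tmax} z zs sequentially"
proof -
  obtain L where L: "L-lipschitz_on {0..} V"
    using V_lip by blast
  have F_prob: "prob_space F"
    and F_sets: "sets F = sets (restrict_space borel (Td \<times> {Xmin..Xmax}))"
    and F_density: "\<forall>B \<in> sets (borel :: (real \<times> real) measure). B \<subseteq> Td \<times> {Xmin..Xmax} \<longrightarrow>
          emeasure F B \<le> ennreal G * emeasure lborel B"
    using F unfolding P_mG_def mem_Collect_eq by blast+
  interpret bathtub Td Xmin Xmax G L F V
    using F_density
    by (intro bathtub.intro compact_imp_closed Td(1) less_imp_le[OF X(2)] less_imp_le[OF G]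
        prob_space.finite_measure[OF F_prob] F_sets L) blast
  interpret weighted_contraction "{0..Tmax}" "\<lambda>t. exp (bielecki_rate Tmax * t)" "1 / 2"
      "U_op Td {Xmin..Xmax} V F"
    using Tmax by (intro weighted_contraction_U) simp
  have "picard_sequence z"
    unfolding picard_sequence_def using z0 z_0 z_Suc by (auto intro: continuous_on_eq)
  then show ?thesis
    by (rule picard_iteration)
qed

end
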